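(* Let $n\ge1$ and let $\varphi:\mathbb{C}[x_1,\dots,x_9]\to\mathbb{C}[a_1,a_2,b_1,b_2]$ be the $\mathbb{C}$-algebra homomorphism defined as follows. Put $u_1=a_1^{n+1},\ v_1=a_1a_2,\ w_1=a_2^{n+1},\ u_2=b_1^{n+1},\ v_2=b_1b_2,\ w_2=b_2^{n+1}$ and $x_1\mapsto u_1+u_2,\ x_2\mapsto v_1+v_2,\ x_3\mapsto w_1+w_2,\ x_4\mapsto (u_1-u_2)^2,\ x_5\mapsto (v_1-v_2)^2,\ x_6\mapsto (w_1-w_2)^2,\ x_7\mapsto (u_1-u_2)(v_1-v_2),\ x_8\mapsto (u_1-u_2)(w_1-w_2),\ x_9\mapsto (v_1-v_2)(w_1-w_2)$. Then $\ker\varphi$ is generated by the ten elements $f_1=\sum_{i=0}^{\lfloor (n+1)/2\rfloor}\binom{n+1}{2i}x_2^{n-2i+1}x_5^i-2^{n-1}(x_1x_3+x_8)$, $f_2=\sum_{i=0}^{\lfloor (n+1)/2\rfloor}\binom{n+1}{2i+1}x_2^{n-2i}x_5^{i+1}-2^{n-1}(x_1x_9+x_3x_7)$, $f_3=x_5x_8-x_7x_9$, $f_4=x_5x_6-x_9^2$, $f_5=x_4x_5-x_7^2$, $f_6=\sum_{i=0}^{\lfloor (n+1)/2\rfloor}\binom{n+1}{2i+1}x_2^{n-2i}x_5^{i}x_9-2^{n-1}(x_1x_6+x_3x_8)$, $f_7=\sum_{i=0}^{\lfloor (n+1)/2\rfloor}\binom{n+1}{2i+1}x_2^{n-2i}x_5^{i}x_7-2^{n-1}(x_3x_4+x_1x_8)$,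 $f_8=x_7x_8-x_4x_9$, $f_9=x_6x_7-x_8x_9$, $f_{10}=x_4x_6-x_8^2$ (binomial coefficients $\binom{m}{k}$ with $k>m$ are zero). Equivalently, these give a presentation of the invariant ring defining $\mathrm{Sym}^2(\Gamma)$ for $\Gamma$ of type $\mathbf{A}_n$.
   Context: The image of $\varphi$ is the ring of invariants of $\mathbb{C}[a_1,a_2,b_1,b_2]$ under the wreath product $C_{n+1}\wr\mathfrak{S}_2$, where the cyclic group $C_{n+1}$ acts on $(a_1,a_2)$ and on $(b_1,b_2)$ by $\mathrm{diag}(\zeta,\zeta^{-1})$, $\zeta$ a primitive $(n+1)$-th root of unity, and $\mathfrak{S}_2$ swaps $a_i\leftrightarrow b_i$; its spectrum is $\mathrm{Sym}^2(\Gamma)$ for $\Gamma=\{x^{n+1}=yz\}$. *)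

theory Defs
  imports Complex_Main "HOL-Library.Poly_Mapping"
begin

text \<open>Multivariate polynomials with complex coefficients in the variables of type 'v,
  represented as finitely supported maps from monomials (exponent vectors) to coefficients.\<close>
type_synonym 'v mpoly = "('v \<Rightarrow>\<^sub>0 nat) \<Rightarrow>\<^sub>0 complex"

datatype xvar = X1 | X2 | X3 | X4 | X5 | X6 | X7 | X8 | X9
datatype tvar = A1 | A2 | B1 | B2

definition Var :: "'v \<Rightarrow> 'v mpoly" where
  "Var v = Poly_Mapping.single (Poly_Mapping.single v 1) 1"

definition Const :: "complex \<Rightarrow> 'v mpoly" where
  "Const c = Poly_Mapping.single 0 c"

definition subst_hom :: "('v \<Rightarrow> 'w mpoly) \<Rightarrow> 'v mpoly \<Rightarrow> 'w mpoly" where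
  "subst_hom g p = (\<Sum>mon\<in>Poly_Mapping.keys p. Const (Poly_Mapping.lookup p mon) * (\<Prod>v\<in>Poly_Mapping.keys (mon::'v \<Rightarrow>\<^sub>0 nat). g v ^ Poly_Mapping.lookup mon v))"

definition ideal_gen :: "'a::comm_ring_1 set \<Rightarrow> 'a set" where
  "ideal_gen S = {\<Sum>s\<in>G. c s * s | G c. finite G \<and> G \<subseteq> S}"

definition phi_img :: "nat \<Rightarrow> xvar \<Rightarrow> tvar mpoly" where
  "phi_img n x = (let
     u1 = Var A1 ^ (n+1); v1 = Var A1 * Var A2; w1 = Var A2 ^ (n+1);
     u2 = Var B1 ^ (n+1); v2 = Var B1 * Var B2; w2 = Var B2 ^ (n+1)
   in case x of
     X1 \<Rightarrow> u1 + u2 | X2 \<Rightarrow> v1 + v2 | X3 \<Rightarrow> w1 + w2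
   | X4 \<Rightarrow> (u1 - u2)^2 | X5 \<Rightarrow> (v1 - v2)^2 | X6 \<Rightarrow> (w1 - w2)^2
   | X7 \<Rightarrow> (u1 - u2) * (v1 - v2) | X8 \<Rightarrow> (u1 - u2) * (w1 - w2)
   | X9 \<Rightarrow> (v1 - v2) * (w1 - w2))"

definition phi :: "nat \<Rightarrow> xvar mpoly \<Rightarrow> tvar mpoly" where
  "phi n = subst_hom (phi_img n)"

definition gens :: "nat \<Rightarrow> xvar mpoly set" where
  "gens n = (let
     x1 = Var X1; x2 = Var X2; x3 = Var X3; x4 = Var X4; x5 = Var X5;
     x6 = Var X6; x7 = Var X7; x8 = Var X8; x9 = Var X9;
     N = (n+1) div 2;
     c = (2::xvar mpoly) ^ (n-1);
     f1 = (\<Sum>i=0..N. of_nat ((n+1) choose (2*i)) * x2 ^ (n + 1 - 2*i) * x5 ^ i)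
            - c * (x1*x3 + x8);
     f2 = (\<Sum>i=0..N. of_nat ((n+1) choose (2*i+1)) * x2 ^ (n - 2*i) * x5 ^ (i+1))
            - c * (x1*x9 + x3*x7);
     f3 = x5*x8 - x7*x9; f4 = x5*x6 - x9^2; f5 = x4*x5 - x7^2;
     f6 = (\<Sum>i=0..N. of_nat ((n+1) choose (2*i+1)) * x2 ^ (n - 2*i) * x5 ^ i * x9)
            - c * (x1*x6 + x3*x8);
     f7 = (\<Sum>i=0..N. of_nat ((n+1) choose (2*i+1)) * x2 ^ (n - 2*i) * x5 ^ i * x7)
            - c * (x3*x4 + x1*x8);
     f8 = x7*x8 - x4*x9; f9 = x6*x7 - x8*x9; f10 = x4*x6 - x8^2
   in {f1, f2, f3, f4, f5, f6, f7, f8, f9, f10})"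

end

theory Submission
  imports Defs
begin

text \<open>
  Write \<open>p\<^sub>i\<close> for \<open>u\<^sub>i, v\<^sub>i, w\<^sub>i\<close> and pass to the coordinates \<open>s = p\<^sub>1 + p\<^sub>2\<close>, \<open>d = p\<^sub>1 - p\<^sub>2\<close>.
  Then \<open>\<phi>\<close> factors as \<open>\<mu> \<circ> L \<circ> \<chi>\<close>: the monomial map \<open>\<chi>\<close> sends \<open>x\<^sub>1, \<dots>, x\<^sub>9\<close> to \<open>s\<^sub>u, s\<^sub>v, s\<^sub>w\<close>
  and the quadratic monomials in \<open>d\<^sub>u, d\<^sub>v, d\<^sub>w\<close>, \<open>L\<close> is the linear change back to the \<open>p\<^sub>i\<close>, and the
  monomial map \<open>\<mu>\<close> sends \<open>u\<^sub>i, v\<^sub>i, w\<^sub>i\<close> to \<open>a\<^sub>i\<^sup>n\<^sup>+\<^sup>1, a\<^sub>1a\<^sub>2, a\<^sub>2\<^sup>n\<^sup>+\<^sup>1\<close> (and likewise for \<open>b\<close>).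
  Kernels of monomial maps are spanned by binomials: that of \<open>\<mu>\<close> is generated by
  \<open>g\<^sub>i = u\<^sub>i w\<^sub>i - v\<^sub>i\<^sup>n\<^sup>+\<^sup>1\<close>, that of \<open>\<chi>\<close> by \<open>f\<^sub>3, f\<^sub>4, f\<^sub>5, f\<^sub>8, f\<^sub>9, f\<^sub>1\<^sub>0\<close>.

  If \<open>\<phi> p = 0\<close>, then \<open>q = \<chi> p\<close> is a combination \<open>A g\<^sub>1 + B g\<^sub>2\<close>. Since \<open>q\<close> is invariant under
  \<open>\<sigma> : d \<mapsto> -d\<close>, which swaps \<open>g\<^sub>1\<close> and \<open>g\<^sub>2\<close>, we get \<open>2q = X g\<^sub>1 + \<sigma>(X) g\<^sub>2\<close>. By the binomial
  theorem, \<open>g\<^sub>1 + g\<^sub>2\<close> is a multiple of \<open>\<chi> f\<^sub>1\<close> and \<open>d\<^sub>v (g\<^sub>1 - g\<^sub>2)\<close>, \<open>d\<^sub>w (g\<^sub>1 - g\<^sub>2)\<close>,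
  \<open>d\<^sub>u (g\<^sub>1 - g\<^sub>2)\<close> are multiples of \<open>\<chi> f\<^sub>2, \<chi> f\<^sub>6, \<chi> f\<^sub>7\<close>; treating \<open>X\<close> monomial by monomial
  according to the parity of its degree in \<open>d\<close>, this shows \<open>2q = \<chi> r\<close> for some \<open>r\<close> in the ideal.
  Then \<open>2p - r \<in> ker \<chi>\<close>, which lies in the ideal as well.
\<close>

definition Monom :: "('v \<Rightarrow>\<^sub>0 nat) \<Rightarrow> 'v mpoly" where
  "Monom m = Poly_Mapping.single m 1"

abbreviation lk :: "('a \<Rightarrow>\<^sub>0 'b::zero) \<Rightarrow> 'a \<Rightarrow> 'b" where
  "lk \<equiv> Poly_Mapping.lookup"

lemma Const_add: "Const (a + b) = (Const a + Const b :: 'v mpoly)"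
  by (simp add: Const_def single_add)

lemma Const_mult: "Const (a * b) = (Const a * Const b :: 'v mpoly)"
  by (simp add: Const_def mult_single)

lemma Const_0 [simp]: "Const 0 = 0"
  by (simp add: Const_def)

lemma Const_1 [simp]: "Const 1 = 1"
  by (simp add: Const_def)

lemma Const_numeral: "Const (numeral k) = (numeral k :: 'v mpoly)"
  by (simp add: Const_def)

lemma Const_sum: "Const (sum f A) = (\<Sum>a\<in>A. Const (f a) :: 'v mpoly)"
  by (induct A rule: infinite_finite_induct) (simp_all add: Const_add)

lemma Const_mult_Monom: "Const c * Monom m = Poly_Mapping.single m c"
  by (simp add: Const_def Monom_def mult_single)

lemma Monom_add: "Monom (a + b) = Monom a * Monom b"
  by (simp add: Monom_def mult_single)

lemma Monom_0 [simp]: "Monom 0 = 1"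
  by (simp add: Monom_def)

lemma Monom_eq_iff: "Monom a = Monom b \<longleftrightarrow> a = b"
  by (metis Monom_def lookup_single_eq lookup_single_not_eq zero_neq_one)

lemma Monom_sum: "Monom (sum f A) = (\<Prod>a\<in>A. Monom (f a))"
  by (induct A rule: infinite_finite_induct) (simp_all add: Monom_add)

lemma Monom_single: "Monom (Poly_Mapping.single v k) = Var v ^ k"
proof (induct k)
  case (Suc k)
  have "Poly_Mapping.single v (Suc k) = Poly_Mapping.single v 1 + Poly_Mapping.single v k"
    by (simp add: single_add[symmetric])
  then show ?case
    using Suc by (simp only: Monom_add) (simp add: Var_def Monom_def)
qed simp

lemma Monom_power: "Monom a ^ k = Monom (\<Sum>i<k. a)"
  by (induct k) (simp_all add: Monom_add)

lemma poly_mapping_sum_single: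
  "p = (\<Sum>m\<in>Poly_Mapping.keys p. Poly_Mapping.single m (lk p m))"
proof (rule poly_mapping_eqI)
  fix k
  have "(\<Sum>m\<in>Poly_Mapping.keys p. lk (Poly_Mapping.single m (lk p m)) k)
      = (\<Sum>m\<in>Poly_Mapping.keys p. if m = k then lk p m else 0)"
    by (rule sum.cong) (auto simp: lookup_single when_def)
  also have "\<dots> = lk p k"
    by (simp add: sum.delta in_keys_iff)
  finally show "lk p k
      = lk (\<Sum>m\<in>Poly_Mapping.keys p. Poly_Mapping.single m (lk p m)) k"
    by (simp add: lookup_sum)
qed

lemma mpoly_sum_Monom: "p = (\<Sum>m\<in>Poly_Mapping.keys p. Const (lk p m) * Monom m)"
  unfolding Const_mult_Monom by (rule poly_mapping_sum_single)

lemma poly_mapping_diff_add_cancel: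
  assumes "\<And>v. lk a v \<le> lk m v"
  shows "(m - a) + a = (m :: 'v \<Rightarrow>\<^sub>0 nat)"
  by (rule poly_mapping_eqI) (simp add: lookup_add lookup_minus assms)

definition Monom_eval :: "('v \<Rightarrow> 'w mpoly) \<Rightarrow> ('v \<Rightarrow>\<^sub>0 nat) \<Rightarrow> 'w mpoly" where
  "Monom_eval g m = (\<Prod>v\<in>Poly_Mapping.keys m. g v ^ lk m v)"

lemma Monom_eval_superset:
  assumes "finite S" "Poly_Mapping.keys m \<subseteq> S"
  shows "Monom_eval g m = (\<Prod>v\<in>S. g v ^ lk m v)"
  unfolding Monom_eval_def
  by (rule prod.mono_neutral_left) (use assms in \<open>auto simp: in_keys_iff\<close>)

lemma Monom_eval_add: "Monom_eval g (a + b) = Monom_eval g a * Monom_eval g b"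
proof -
  let ?S = "Poly_Mapping.keys a \<union> Poly_Mapping.keys b"
  have "Monom_eval g (a + b) = (\<Prod>v\<in>?S. g v ^ lk (a + b) v)"
    by (rule Monom_eval_superset) (auto simp: keys_add)
  also have "\<dots> = (\<Prod>v\<in>?S. g v ^ lk a v) * (\<Prod>v\<in>?S. g v ^ lk b v)"
    by (simp add: lookup_add power_add prod.distrib)
  also have "\<dots> = Monom_eval g a * Monom_eval g b"
    by (simp add: Monom_eval_superset[of ?S])
  finally show ?thesis .
qed

lemma Monom_eval_single: "Monom_eval g (Poly_Mapping.single v k) = g v ^ k"
  by (cases "k = 0") (simp_all add: Monom_eval_def)

lemma Monom_eval_Var: "Monom_eval Var m = Monom m"
proof -
  have "Monom m = Monom (\<Sum>v\<in>Poly_Mapping.keys m. Poly_Mapping.single v (lk m v))"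
    by (metis poly_mapping_sum_single)
  then show ?thesis
    by (simp add: Monom_sum Monom_single Monom_eval_def)
qed

lemma subst_hom_superset:
  assumes "finite K" "Poly_Mapping.keys p \<subseteq> K"
  shows "subst_hom g p = (\<Sum>m\<in>K. Const (lk p m) * Monom_eval g m)"
  unfolding subst_hom_def Monom_eval_def[symmetric]
  by (rule sum.mono_neutral_left) (use assms in \<open>auto simp: in_keys_iff\<close>)

lemma subst_hom_eq_sum: "subst_hom g p = (\<Sum>m\<in>Poly_Mapping.keys p. Const (lk p m) * Monom_eval g m)"
  by (simp add: subst_hom_def Monom_eval_def)

lemma subst_hom_add: "subst_hom g (p + q) = subst_hom g p + subst_hom g q"
proof -
  let ?K = "Poly_Mapping.keys p \<union> Poly_Mapping.keys q"
  have "subst_hom g (p + q) = (\<Sum>m\<in>?K. Const (lk (p + q) m) * Monom_eval g m)"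
    by (rule subst_hom_superset) (auto simp: keys_add)
  also have "\<dots> = (\<Sum>m\<in>?K. Const (lk p m) * Monom_eval g m) + (\<Sum>m\<in>?K. Const (lk q m) * Monom_eval g m)"
    by (simp add: lookup_add Const_add distrib_right sum.distrib)
  also have "\<dots> = subst_hom g p + subst_hom g q"
    by (simp add: subst_hom_superset[of ?K])
  finally show ?thesis .
qed

lemma subst_hom_0 [simp]: "subst_hom g 0 = 0"
  by (simp add: subst_hom_def)

lemma subst_hom_single: "subst_hom g (Poly_Mapping.single m c) = Const c * Monom_eval g m"
  by (subst subst_hom_superset[of "{m}"]) auto

lemma subst_hom_Monom: "subst_hom g (Monom m) = Monom_eval g m"
  by (simp add: Monom_def subst_hom_single)

lemma subst_hom_sum: "subst_hom g (sum f A) = (\<Sum>a\<in>A. subst_hom g (f a))"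
  by (induct A rule: infinite_finite_induct) (simp_all add: subst_hom_add)

lemma subst_hom_mult: "subst_hom g (p * q) = subst_hom g p * subst_hom g q"
proof -
  let ?P = "Poly_Mapping.keys p" and ?Q = "Poly_Mapping.keys q"
  have "p * q = (\<Sum>a\<in>?P. Poly_Mapping.single a (lk p a)) * (\<Sum>b\<in>?Q. Poly_Mapping.single b (lk q b))"
    by (metis poly_mapping_sum_single)
  also have "\<dots> = (\<Sum>a\<in>?P. \<Sum>b\<in>?Q. Poly_Mapping.single (a + b) (lk p a * lk q b))"
    by (simp add: sum_product mult_single)
  finally have "subst_hom g (p * q) = (\<Sum>a\<in>?P. \<Sum>b\<in>?Q. Const (lk p a * lk q b) * Monom_eval g (a + b))"
    by (simp add: subst_hom_sum subst_hom_single)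
  also have "\<dots> = (\<Sum>a\<in>?P. \<Sum>b\<in>?Q. (Const (lk p a) * Monom_eval g a) * (Const (lk q b) * Monom_eval g b))"
    by (simp add: Const_mult Monom_eval_add mult_ac)
  also have "\<dots> = subst_hom g p * subst_hom g q"
    by (simp add: subst_hom_eq_sum sum_product)
  finally show ?thesis .
qed

lemma subst_hom_Const [simp]: "subst_hom g (Const c) = Const c"
  unfolding Const_def by (simp add: subst_hom_single Const_def Monom_eval_def)

lemma subst_hom_1 [simp]: "subst_hom g 1 = 1"
  using subst_hom_Const[of g 1] by simp

lemma subst_hom_Var [simp]: "subst_hom g (Var v) = g v"
  unfolding Var_def by (simp add: subst_hom_single Monom_eval_single)

lemma subst_hom_uminus: "subst_hom g (- p) = - subst_hom g p"
  using subst_hom_add[of g p "- p"] by (simp add: add_eq_0_iff2)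

lemma subst_hom_diff: "subst_hom g (p - q) = subst_hom g p - subst_hom g q"
  using subst_hom_add[of g p "- q"] by (simp add: subst_hom_uminus)

lemma subst_hom_power: "subst_hom g (p ^ k) = subst_hom g p ^ k"
  by (induct k) (simp_all add: subst_hom_mult)

lemma subst_hom_prod: "subst_hom g (prod f A) = (\<Prod>a\<in>A. subst_hom g (f a))"
  by (induct A rule: infinite_finite_induct) (simp_all add: subst_hom_mult)

lemma subst_hom_of_nat [simp]: "subst_hom g (of_nat k) = of_nat k"
  by (induct k) (simp_all add: subst_hom_add)

lemma subst_hom_numeral [simp]: "subst_hom g (numeral k) = numeral k"
  by (metis of_nat_numeral subst_hom_of_nat)

lemmas subst_hom_ring_simps =
  subst_hom_add subst_hom_diff subst_hom_uminus subst_hom_mult subst_hom_power subst_hom_sum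

lemma subst_hom_Var_id: "subst_hom Var p = p"
  using mpoly_sum_Monom[of p] by (simp add: subst_hom_eq_sum Monom_eval_Var)

lemma subst_hom_Monom_eval: "subst_hom h (Monom_eval g m) = Monom_eval (\<lambda>v. subst_hom h (g v)) m"
  by (simp add: Monom_eval_def subst_hom_prod subst_hom_power)

lemma subst_hom_subst_hom: "subst_hom h (subst_hom g p) = subst_hom (\<lambda>v. subst_hom h (g v)) p"
  by (simp add: subst_hom_eq_sum[of g] subst_hom_eq_sum[of "\<lambda>v. subst_hom h (g v)"]
      subst_hom_sum subst_hom_mult subst_hom_Monom_eval)

lemma subst_hom_inverse:
  assumes "\<And>v. subst_hom h (g v) = Var v"
  shows "subst_hom h (subst_hom g p) = p"
  by (simp add: subst_hom_subst_hom assms subst_hom_Var_id)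

lemma ideal_gen_0 [simp]: "0 \<in> ideal_gen S"
  unfolding ideal_gen_def by (rule CollectI, rule exI[of _ "{}"]) auto

lemma ideal_gen_base: "s \<in> S \<Longrightarrow> s \<in> ideal_gen S"
  unfolding ideal_gen_def by (rule CollectI, rule exI[of _ "{s}"], rule exI[of _ "\<lambda>_. 1"]) auto

lemma ideal_gen_mult_left: "x \<in> ideal_gen S \<Longrightarrow> r * x \<in> ideal_gen S"
proof -
  assume "x \<in> ideal_gen S"
  then obtain G c where x: "x = (\<Sum>s\<in>G. c s * s)" "finite G" "G \<subseteq> S"
    unfolding ideal_gen_def by blast
  have "r * x = (\<Sum>s\<in>G. (\<lambda>s. r * c s) s * s)"
    by (simp add: x sum_distrib_left mult.assoc)
  then show ?thesis
    unfolding ideal_gen_def using x by (intro CollectI exI[of _ G] exI[of _ "\<lambda>s. r * c s"]) simp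
qed

lemma ideal_gen_mult_right: "x \<in> ideal_gen S \<Longrightarrow> x * r \<in> ideal_gen S"
  using ideal_gen_mult_left[of x S r] by (simp add: mult.commute)

lemma ideal_gen_uminus: "x \<in> ideal_gen S \<Longrightarrow> - x \<in> ideal_gen S"
  using ideal_gen_mult_left[of x S "- 1"] by simp

lemma sum_mult_extend:
  fixes c :: "'a \<Rightarrow> 'a::comm_ring_1"
  assumes "finite H" "G \<subseteq> H"
  shows "(\<Sum>s\<in>G. c s * s) = (\<Sum>s\<in>H. (if s \<in> G then c s else 0) * s)"
proof -
  have "(\<Sum>s\<in>H. (if s \<in> G then c s else 0) * s) = (\<Sum>s\<in>H. if s \<in> G then c s * s else 0)"
    by (rule sum.cong) auto
  also have "\<dots> = (\<Sum>s\<in>G. c s * s)"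
    using sum.inter_restrict[OF assms(1), of "\<lambda>s. c s * s" G] assms(2)
    by (simp add: Int_absorb1)
  finally show ?thesis ..
qed

lemma ideal_gen_add: "x \<in> ideal_gen S \<Longrightarrow> y \<in> ideal_gen S \<Longrightarrow> x + y \<in> ideal_gen S"
proof -
  assume "x \<in> ideal_gen S" "y \<in> ideal_gen S"
  then obtain G c H d where x: "x = (\<Sum>s\<in>G. c s * s)" "finite G" "G \<subseteq> S"
    and y: "y = (\<Sum>s\<in>H. d s * s)" "finite H" "H \<subseteq> S"
    unfolding ideal_gen_def by blast
  have "x + y = (\<Sum>s\<in>G \<union> H. ((if s \<in> G then c s else 0) + (if s \<in> H then d s else 0)) * s)"
    using x y sum_mult_extend[of "G \<union> H" G c] sum_mult_extend[of "G \<union> H" H d]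
    by (simp add: distrib_right sum.distrib)
  then show ?thesis
    unfolding ideal_gen_def using x y
    by (intro CollectI exI[of _ "G \<union> H"] exI[of _ "\<lambda>s. (if s \<in> G then c s else 0) + (if s \<in> H then d s else 0)"])
      simp
qed

lemma ideal_gen_sum: "(\<And>a. a \<in> A \<Longrightarrow> f a \<in> ideal_gen S) \<Longrightarrow> sum f A \<in> ideal_gen S"
  by (induct A rule: infinite_finite_induct) (auto intro: ideal_gen_add)

lemma ideal_gen_power_diff:
  assumes "a - b \<in> ideal_gen S"
  shows "a ^ k - b ^ k \<in> ideal_gen S"
proof (induct k)
  case (Suc k)
  have "a ^ Suc k - b ^ Suc k = a * (a ^ k - b ^ k) + (a - b) * b ^ k"
    by (simp add: algebra_simps)
  then show ?case
    using Suc assms by (metis ideal_gen_add ideal_gen_mult_left ideal_gen_mult_right)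
qed simp

lemma ideal_gen_pairE:
  assumes "x \<in> ideal_gen {a, b}"
  obtains A B where "x = A * a + B * b"
proof -
  obtain G c where x: "x = (\<Sum>s\<in>G. c s * s)" "finite G" "G \<subseteq> {a, b}"
    using assms unfolding ideal_gen_def by blast
  have "\<exists>A B. (\<Sum>s\<in>G. c s * s) = A * a + B * b"
    using x(2,3)
  proof (induct G rule: finite_induct)
    case empty
    then show ?case by (intro exI[of _ 0]) simp
  next
    case (insert y F)
    then obtain A B where AB: "(\<Sum>s\<in>F. c s * s) = A * a + B * b"
      by auto
    from insert consider "y = a" | "y = b"
      by auto
    then show ?case
    proof cases
      case 1
      then show ?thesis using insert AB
        by (intro exI[of _ "A + c y"] exI[of _ B]) (simp add: algebra_simps)
    next
      case 2
      then show ?thesis using insert AB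
        by (intro exI[of _ A] exI[of _ "B + c y"]) (simp add: algebra_simps)
    qed
  qed
  then show ?thesis
    using that x(1) by blast
qed

lemma subst_hom_ideal_gen_eq_0:
  assumes "\<And>s. s \<in> S \<Longrightarrow> subst_hom g s = 0" and "p \<in> ideal_gen S"
  shows "subst_hom g p = 0"
proof -
  obtain G c where p: "p = (\<Sum>s\<in>G. c s * s)" "G \<subseteq> S"
    using assms(2) unfolding ideal_gen_def by blast
  then show ?thesis
    using assms(1) by (auto simp: subst_hom_sum subst_hom_mult intro!: sum.neutral)
qed

section \<open>Kernels of monomial maps\<close>

definition exps_map :: "('v \<Rightarrow> ('w \<Rightarrow>\<^sub>0 nat)) \<Rightarrow> ('v \<Rightarrow>\<^sub>0 nat) \<Rightarrow> ('w \<Rightarrow>\<^sub>0 nat)" where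
  "exps_map \<nu> m = (\<Sum>v\<in>Poly_Mapping.keys m. \<Sum>i<lk m v. \<nu> v)"

lemma Monom_eval_Monom: "Monom_eval (\<lambda>v. Monom (\<nu> v)) m = Monom (exps_map \<nu> m)"
  by (simp only: Monom_eval_def exps_map_def Monom_power Monom_sum)

lemma subst_hom_Monom_Monom: "subst_hom (\<lambda>v. Monom (\<nu> v)) (Monom m) = Monom (exps_map \<nu> m)"
  by (simp add: subst_hom_Monom Monom_eval_Monom)

lemma exps_map_add: "exps_map \<nu> (a + b) = exps_map \<nu> a + exps_map \<nu> b"
  using Monom_eval_add[of "\<lambda>v. Monom (\<nu> v)" a b]
  by (simp add: Monom_eval_Monom flip: Monom_add Monom_eq_iff)

lemma lookup_exps_map:
  assumes "finite (UNIV :: 'v set)"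
  shows "lk (exps_map \<nu> (m :: 'v \<Rightarrow>\<^sub>0 nat)) w = (\<Sum>v\<in>UNIV. lk m v * lk (\<nu> v) w)"
proof -
  have "lk (exps_map \<nu> m) w = (\<Sum>v\<in>Poly_Mapping.keys m. lk m v * lk (\<nu> v) w)"
    by (simp add: exps_map_def lookup_sum)
  also have "\<dots> = (\<Sum>v\<in>UNIV. lk m v * lk (\<nu> v) w)"
    by (rule sum.mono_neutral_left) (use assms in \<open>auto simp: in_keys_iff\<close>)
  finally show ?thesis .
qed

lemma Monom_exchange:
  assumes le: "\<And>v. lk A v \<le> lk m v"
    and AB: "Monom A - Monom B \<in> ideal_gen S"
    and exps: "exps_map \<nu> A = exps_map \<nu> B"
    and reduced: "Monom (m - A + B) - Monom (R (exps_map \<nu> (m - A + B))) \<in> ideal_gen S"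
  shows "Monom m - Monom (R (exps_map \<nu> m)) \<in> ideal_gen S"
proof -
  define c where "c = m - A"
  have m: "m = c + A"
    unfolding c_def by (rule poly_mapping_diff_add_cancel[OF le, symmetric])
  have "Monom m - Monom (c + B) = Monom c * (Monom A - Monom B)"
    unfolding m Monom_add by (simp add: right_diff_distrib)
  also have "\<dots> \<in> ideal_gen S"
    by (rule ideal_gen_mult_left[OF AB])
  finally have "Monom m - Monom (c + B) \<in> ideal_gen S" .
  moreover have "exps_map \<nu> m = exps_map \<nu> (c + B)"
    unfolding m exps_map_add exps ..
  ultimately show ?thesis
    using ideal_gen_add[OF _ reduced] unfolding c_def by fastforce
qed

text \<open>A monomial map has a binomial kernel: choose a monomial \<open>R t\<close> in every fibre of
  \<open>exps_map \<nu>\<close>. If every monomial is congruent to the chosen one in its fibre, a polynomial is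
  congruent to a combination of the chosen monomials whose coefficients are those of its image.\<close>
lemma subst_hom_Monom_kernel:
  assumes R: "\<And>m. Monom m - Monom (R (exps_map \<nu> m)) \<in> ideal_gen S"
    and p: "subst_hom (\<lambda>v. Monom (\<nu> v)) p = 0"
  shows "p \<in> ideal_gen S"
proof -
  let ?K = "Poly_Mapping.keys p" and ?c = "lk p"
  define q where "q = (\<Sum>m\<in>?K. Const (?c m) * Monom (R (exps_map \<nu> m)))"
  have "p - q = (\<Sum>m\<in>?K. Const (?c m) * (Monom m - Monom (R (exps_map \<nu> m))))"
    by (subst mpoly_sum_Monom) (simp only: q_def sum_subtractf right_diff_distrib)
  also have "\<dots> \<in> ideal_gen S"
    by (intro ideal_gen_sum ideal_gen_mult_left R)
  finally have pq: "p - q \<in> ideal_gen S" .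
  have fibre_sum: "(\<Sum>m\<in>{m\<in>?K. exps_map \<nu> m = t}. ?c m) = 0" for t
  proof -
    have "(\<Sum>m\<in>{m\<in>?K. exps_map \<nu> m = t}. ?c m) = lk (subst_hom (\<lambda>v. Monom (\<nu> v)) p) t"
      by (simp add: subst_hom_eq_sum Monom_eval_Monom Const_mult_Monom lookup_sum lookup_single
          when_def sum.inter_filter)
    then show ?thesis
      using p by simp
  qed
  have "q = (\<Sum>t\<in>exps_map \<nu> ` ?K. \<Sum>m\<in>{m\<in>?K. exps_map \<nu> m = t}. Const (?c m) * Monom (R t))"
    unfolding q_def by (subst sum.image_gen) (auto intro!: sum.cong)
  also have "\<dots> = 0"
    by (simp add: fibre_sum flip: sum_distrib_right Const_sum)
  finally show ?thesis
    using pq by simp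
qed

lemma binomial_ring_parts:
  fixes s d :: "'a::comm_ring_1" and m :: nat
  defines "T \<equiv> \<lambda>k. of_nat (m choose k) * d ^ k * s ^ (m - k)"
  shows "(d + s) ^ m = (\<Sum>i\<le>m div 2. T (2 * i) + T (Suc (2 * i)))"
    and "(- d + s) ^ m = (\<Sum>i\<le>m div 2. T (2 * i) - T (Suc (2 * i)))"
proof -
  have extend: "(\<Sum>k\<le>m. f k) = (\<Sum>k\<le>Suc (2 * (m div 2)). f k)"
    if "\<And>k. k > m \<Longrightarrow> f k = 0" for f :: "nat \<Rightarrow> 'a"
    by (rule sum.mono_neutral_left) (auto simp: that)
  have "(d + s) ^ m = (\<Sum>k\<le>m. T k)"
    unfolding T_def binomial_ring ..
  also have "\<dots> = (\<Sum>k\<le>Suc (2 * (m div 2)). T k)"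
    by (rule extend) (simp add: T_def binomial_eq_0)
  also have "\<dots> = (\<Sum>i\<le>m div 2. T (2 * i) + T (Suc (2 * i)))"
    by (rule sum.in_pairs_0)
  finally show "(d + s) ^ m = (\<Sum>i\<le>m div 2. T (2 * i) + T (Suc (2 * i)))" .
  have "(- d + s) ^ m = (\<Sum>k\<le>m. (- 1) ^ k * T k)"
    unfolding T_def binomial_ring by (rule sum.cong) (simp_all add: power_minus[of d] mult_ac)
  also have "\<dots> = (\<Sum>k\<le>Suc (2 * (m div 2)). (- 1) ^ k * T k)"
    by (rule extend) (simp add: T_def binomial_eq_0)
  also have "\<dots> = (\<Sum>i\<le>m div 2. (- 1) ^ (2 * i) * T (2 * i) + (- 1) ^ Suc (2 * i) * T (Suc (2 * i)))"
    by (rule sum.in_pairs_0)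
  also have "\<dots> = (\<Sum>i\<le>m div 2. T (2 * i) - T (Suc (2 * i)))"
    by (simp add: power_mult)
  finally show "(- d + s) ^ m = (\<Sum>i\<le>m div 2. T (2 * i) - T (Suc (2 * i)))" .
qed

lemma power_add_plus_power_diff:
  fixes s d :: "'a::comm_ring_1"
  shows "(s + d) ^ m + (s - d) ^ m
    = 2 * (\<Sum>i=0..m div 2. of_nat (m choose (2 * i)) * s ^ (m - 2 * i) * (d ^ 2) ^ i)"
proof -
  have "(s + d) ^ m + (s - d) ^ m = (d + s) ^ m + (- d + s) ^ m"
    by (simp add: algebra_simps)
  also have "\<dots> = (\<Sum>i\<le>m div 2. 2 * (of_nat (m choose (2 * i)) * d ^ (2 * i) * s ^ (m - 2 * i)))"
    unfolding binomial_ring_parts sum.distrib[symmetric] by (rule sum.cong) simp_all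
  also have "\<dots> = 2 * (\<Sum>i=0..m div 2. of_nat (m choose (2 * i)) * s ^ (m - 2 * i) * (d ^ 2) ^ i)"
    unfolding sum_distrib_left atLeast0AtMost by (rule sum.cong) (simp_all add: mult_ac flip: power_mult)
  finally show ?thesis .
qed

lemma power_add_minus_power_diff:
  fixes s d :: "'a::comm_ring_1"
  shows "(s + d) ^ (n + 1) - (s - d) ^ (n + 1)
    = 2 * d * (\<Sum>i=0..(n + 1) div 2. of_nat ((n + 1) choose (2 * i + 1)) * s ^ (n - 2 * i) * (d ^ 2) ^ i)"
proof -
  have "(s + d) ^ (n + 1) - (s - d) ^ (n + 1) = (d + s) ^ (n + 1) - (- d + s) ^ (n + 1)"
    by (simp add: algebra_simps)
  also have "\<dots> = (\<Sum>i\<le>(n + 1) div 2.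
      2 * (of_nat ((n + 1) choose Suc (2 * i)) * d ^ Suc (2 * i) * s ^ (n + 1 - Suc (2 * i))))"
    unfolding binomial_ring_parts sum_subtractf[symmetric] by (rule sum.cong) simp_all
  also have "\<dots> = 2 * d * (\<Sum>i=0..(n + 1) div 2.
      of_nat ((n + 1) choose (2 * i + 1)) * s ^ (n - 2 * i) * (d ^ 2) ^ i)"
    unfolding sum_distrib_left atLeast0AtMost by (rule sum.cong) (simp_all add: mult_ac flip: power_mult)
  finally show ?thesis .
qed

text \<open>With \<open>h = 1/2\<close>, \<open>g\<^sub>1\<close> and \<open>g\<^sub>2\<close> are the equations \<open>u\<^sub>i w\<^sub>i - v\<^sub>i\<^sup>n\<^sup>+\<^sup>1\<close> of the two factors,
  written in the coordinates \<open>s = p\<^sub>1 + p\<^sub>2\<close>, \<open>d = p\<^sub>1 - p\<^sub>2\<close>.\<close>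
lemma relation_sum_diff_identities:
  fixes su sv sw du dv dw h :: "'a::comm_ring_1"
  assumes h: "2 * h = 1" and n: "n \<ge> 1"
  defines "g\<^sub>1 \<equiv> h * (su + du) * (h * (sw + dw)) - (h * (sv + dv)) ^ (n + 1)"
    and "g\<^sub>2 \<equiv> h * (su - du) * (h * (sw - dw)) - (h * (sv - dv)) ^ (n + 1)"
    and "SE \<equiv> (\<Sum>i=0..(n + 1) div 2. of_nat ((n + 1) choose (2 * i)) * sv ^ (n + 1 - 2 * i) * (dv ^ 2) ^ i)"
    and "SO \<equiv> (\<Sum>i=0..(n + 1) div 2. of_nat ((n + 1) choose (2 * i + 1)) * sv ^ (n - 2 * i) * (dv ^ 2) ^ i)"
  shows "g\<^sub>1 + g\<^sub>2 = - (h ^ n) * (SE - 2 ^ (n - 1) * (su * sw + du * dw))"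
    and "g\<^sub>1 - g\<^sub>2 = - (h ^ n) * (SO * dv - 2 ^ (n - 1) * (su * dw + sw * du))"
proof -
  obtain k where k: "n = Suc k"
    using n by (cases n) auto
  have hn: "h ^ n * 2 ^ (n - 1) = h"
  proof -
    have "h ^ n * 2 ^ (n - 1) = h * (2 * h) ^ k"
      by (simp add: k power_mult_distrib mult_ac)
    then show ?thesis
      using h by simp
  qed
  have h2: "h ^ (n + 1) * 2 = h ^ n"
    using h by (simp add: mult_ac flip: mult.assoc)
  have even: "(h * (sv + dv)) ^ (n + 1) + (h * (sv - dv)) ^ (n + 1) = h ^ n * SE"
  proof -
    have "(h * (sv + dv)) ^ (n + 1) + (h * (sv - dv)) ^ (n + 1)
        = h ^ (n + 1) * ((sv + dv) ^ (n + 1) + (sv - dv) ^ (n + 1))"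
      unfolding power_mult_distrib by (simp only: distrib_left)
    also have "\<dots> = (h ^ (n + 1) * 2) * SE"
      unfolding power_add_plus_power_diff SE_def by (simp add: mult_ac)
    finally show ?thesis
      unfolding h2 .
  qed
  have odd: "(h * (sv + dv)) ^ (n + 1) - (h * (sv - dv)) ^ (n + 1) = h ^ n * (SO * dv)"
  proof -
    have "(h * (sv + dv)) ^ (n + 1) - (h * (sv - dv)) ^ (n + 1)
        = h ^ (n + 1) * ((sv + dv) ^ (n + 1) - (sv - dv) ^ (n + 1))"
      unfolding power_mult_distrib by (simp only: right_diff_distrib)
    also have "\<dots> = (h ^ (n + 1) * 2) * (SO * dv)"
      unfolding power_add_minus_power_diff SO_def by (simp add: mult_ac)
    finally show ?thesis
      unfolding h2 .
  qed
  have "g\<^sub>1 + g\<^sub>2 = (2 * h) * h * (su * sw + du * dw)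
      - ((h * (sv + dv)) ^ (n + 1) + (h * (sv - dv)) ^ (n + 1))"
    unfolding g\<^sub>1_def g\<^sub>2_def by (simp add: algebra_simps)
  also have "\<dots> = - (h ^ n) * SE + (h ^ n * 2 ^ (n - 1)) * (su * sw + du * dw)"
    unfolding even hn h by simp
  finally show "g\<^sub>1 + g\<^sub>2 = - (h ^ n) * (SE - 2 ^ (n - 1) * (su * sw + du * dw))"
    by (simp add: algebra_simps)
  have "g\<^sub>1 - g\<^sub>2 = (2 * h) * h * (su * dw + sw * du)
      - ((h * (sv + dv)) ^ (n + 1) - (h * (sv - dv)) ^ (n + 1))"
    unfolding g\<^sub>1_def g\<^sub>2_def by (simp add: algebra_simps)
  also have "\<dots> = - (h ^ n) * (SO * dv) + (h ^ n * 2 ^ (n - 1)) * (su * dw + sw * du)"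
    unfolding odd hn h by simp
  finally show "g\<^sub>1 - g\<^sub>2 = - (h ^ n) * (SO * dv - 2 ^ (n - 1) * (su * dw + sw * du))"
    by (simp add: algebra_simps)
qed

section \<open>The monomial map \<open>\<chi>\<close>\<close>

datatype sdvar = SU | SV | SW | DU | DV | DW

lemma UNIV_xvar: "(UNIV :: xvar set) = {X1, X2, X3, X4, X5, X6, X7, X8, X9}"
  using xvar.exhaust by blast

lemma UNIV_sdvar: "(UNIV :: sdvar set) = {SU, SV, SW, DU, DV, DW}"
  using sdvar.exhaust by blast

definition f1 :: "nat \<Rightarrow> xvar mpoly" where
  "f1 n = (\<Sum>i=0..(n + 1) div 2. of_nat ((n + 1) choose (2 * i)) * Var X2 ^ (n + 1 - 2 * i) * Var X5 ^ i)
    - 2 ^ (n - 1) * (Var X1 * Var X3 + Var X8)"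
definition f2 :: "nat \<Rightarrow> xvar mpoly" where
  "f2 n = (\<Sum>i=0..(n + 1) div 2. of_nat ((n + 1) choose (2 * i + 1)) * Var X2 ^ (n - 2 * i) * Var X5 ^ (i + 1))
    - 2 ^ (n - 1) * (Var X1 * Var X9 + Var X3 * Var X7)"
definition f3 :: "xvar mpoly" where "f3 = Var X5 * Var X8 - Var X7 * Var X9"
definition f4 :: "xvar mpoly" where "f4 = Var X5 * Var X6 - Var X9 ^ 2"
definition f5 :: "xvar mpoly" where "f5 = Var X4 * Var X5 - Var X7 ^ 2"
definition f6 :: "nat \<Rightarrow> xvar mpoly" where
  "f6 n = (\<Sum>i=0..(n + 1) div 2. of_nat ((n + 1) choose (2 * i + 1)) * Var X2 ^ (n - 2 * i) * Var X5 ^ i * Var X9)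
    - 2 ^ (n - 1) * (Var X1 * Var X6 + Var X3 * Var X8)"
definition f7 :: "nat \<Rightarrow> xvar mpoly" where
  "f7 n = (\<Sum>i=0..(n + 1) div 2. of_nat ((n + 1) choose (2 * i + 1)) * Var X2 ^ (n - 2 * i) * Var X5 ^ i * Var X7)
    - 2 ^ (n - 1) * (Var X3 * Var X4 + Var X1 * Var X8)"
definition f8 :: "xvar mpoly" where "f8 = Var X7 * Var X8 - Var X4 * Var X9"
definition f9 :: "xvar mpoly" where "f9 = Var X6 * Var X7 - Var X8 * Var X9"
definition f10 :: "xvar mpoly" where "f10 = Var X4 * Var X6 - Var X8 ^ 2"

lemma gens_eq: "gens n = {f1 n, f2 n, f3, f4, f5, f6 n, f7 n, f8, f9, f10}"
  by (simp add: gens_def Let_def f1_def f2_def f3_def f4_def f5_def f6_def f7_def f8_def f9_def f10_def)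

lemma quadratic_binomials_in_ideal:
  "Var X7 ^ 2 - Var X4 * Var X5 \<in> ideal_gen (gens n)"
  "Var X8 ^ 2 - Var X4 * Var X6 \<in> ideal_gen (gens n)"
  "Var X9 ^ 2 - Var X5 * Var X6 \<in> ideal_gen (gens n)"
  "Var X7 * Var X8 - Var X4 * Var X9 \<in> ideal_gen (gens n)"
  "Var X7 * Var X9 - Var X5 * Var X8 \<in> ideal_gen (gens n)"
  "Var X8 * Var X9 - Var X6 * Var X7 \<in> ideal_gen (gens n)"
  using ideal_gen_base[of _ "gens n"] ideal_gen_uminus[OF ideal_gen_base[of _ "gens n"]]
  by (fastforce simp: gens_eq f3_def f4_def f5_def f8_def f9_def f10_def)+

definition chi_exps :: "xvar \<Rightarrow> (sdvar \<Rightarrow>\<^sub>0 nat)" where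
  "chi_exps x = (case x of
     X1 \<Rightarrow> Poly_Mapping.single SU 1 | X2 \<Rightarrow> Poly_Mapping.single SV 1 | X3 \<Rightarrow> Poly_Mapping.single SW 1
   | X4 \<Rightarrow> Poly_Mapping.single DU 2 | X5 \<Rightarrow> Poly_Mapping.single DV 2 | X6 \<Rightarrow> Poly_Mapping.single DW 2
   | X7 \<Rightarrow> Poly_Mapping.single DU 1 + Poly_Mapping.single DV 1
   | X8 \<Rightarrow> Poly_Mapping.single DU 1 + Poly_Mapping.single DW 1
   | X9 \<Rightarrow> Poly_Mapping.single DV 1 + Poly_Mapping.single DW 1)"

definition chi :: "xvar \<Rightarrow> sdvar mpoly" where
  "chi x = Monom (chi_exps x)"

lemma chi_simps:
  "chi X1 = Var SU" "chi X2 = Var SV" "chi X3 = Var SW"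
  "chi X4 = Var DU ^ 2" "chi X5 = Var DV ^ 2" "chi X6 = Var DW ^ 2"
  "chi X7 = Var DU * Var DV" "chi X8 = Var DU * Var DW" "chi X9 = Var DV * Var DW"
  by (simp_all add: chi_def chi_exps_def Monom_add Monom_single)

lemma lookup_exps_map_chi_exps:
  "lk (exps_map chi_exps m) w = (case w of
      SU \<Rightarrow> lk m X1 | SV \<Rightarrow> lk m X2 | SW \<Rightarrow> lk m X3
    | DU \<Rightarrow> 2 * lk m X4 + lk m X7 + lk m X8
    | DV \<Rightarrow> 2 * lk m X5 + lk m X7 + lk m X9
    | DW \<Rightarrow> 2 * lk m X6 + lk m X8 + lk m X9)"
  by (cases w) (simp_all add: lookup_exps_map UNIV_xvar chi_exps_def lookup_add lookup_single)

lemma exps_map_chi_exps_eqI: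
  assumes "lk a X1 = lk b X1" "lk a X2 = lk b X2" "lk a X3 = lk b X3"
    "2 * lk a X4 + lk a X7 + lk a X8 = 2 * lk b X4 + lk b X7 + lk b X8"
    "2 * lk a X5 + lk a X7 + lk a X9 = 2 * lk b X5 + lk b X7 + lk b X9"
    "2 * lk a X6 + lk a X8 + lk a X9 = 2 * lk b X6 + lk b X8 + lk b X9"
  shows "exps_map chi_exps a = exps_map chi_exps b"
  by (rule poly_mapping_eqI, case_tac k) (simp_all add: lookup_exps_map_chi_exps assms)

definition diff_degree :: "(sdvar \<Rightarrow>\<^sub>0 nat) \<Rightarrow> nat" where
  "diff_degree t = lk t DU + lk t DV + lk t DW"

definition mixed_degree :: "(xvar \<Rightarrow>\<^sub>0 nat) \<Rightarrow> nat" where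
  "mixed_degree m = lk m X7 + lk m X8 + lk m X9"

text \<open>The normal form in a fibre of \<open>exps_map chi_exps\<close>: the mixed variables \<open>x\<^sub>7, x\<^sub>8, x\<^sub>9\<close>
  only correct the parities of the exponents of \<open>d\<^sub>u, d\<^sub>v, d\<^sub>w\<close>.\<close>
definition chi_preimage :: "(sdvar \<Rightarrow>\<^sub>0 nat) \<Rightarrow> (xvar \<Rightarrow>\<^sub>0 nat)" where
  "chi_preimage t =
     Poly_Mapping.single X1 (lk t SU) + Poly_Mapping.single X2 (lk t SV) + Poly_Mapping.single X3 (lk t SW)
     + Poly_Mapping.single X4 (lk t DU div 2) + Poly_Mapping.single X5 (lk t DV div 2)
     + Poly_Mapping.single X6 (lk t DW div 2)
     + Poly_Mapping.single X7 (if odd (lk t DU) \<and> odd (lk t DV) then 1 else 0)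
     + Poly_Mapping.single X8 (if odd (lk t DU) \<and> odd (lk t DW) then 1 else 0)
     + Poly_Mapping.single X9 (if odd (lk t DV) \<and> odd (lk t DW) then 1 else 0)"

lemma lookup_chi_preimage:
  "lk (chi_preimage t) x = (case x of
      X1 \<Rightarrow> lk t SU | X2 \<Rightarrow> lk t SV | X3 \<Rightarrow> lk t SW
    | X4 \<Rightarrow> lk t DU div 2 | X5 \<Rightarrow> lk t DV div 2 | X6 \<Rightarrow> lk t DW div 2
    | X7 \<Rightarrow> (if odd (lk t DU) \<and> odd (lk t DV) then 1 else 0)
    | X8 \<Rightarrow> (if odd (lk t DU) \<and> odd (lk t DW) then 1 else 0)
    | X9 \<Rightarrow> (if odd (lk t DV) \<and> odd (lk t DW) then 1 else 0))"
  by (cases x) (simp_all add: chi_preimage_def lookup_add lookup_single)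

lemma exps_map_chi_preimage:
  assumes "even (diff_degree t)"
  shows "exps_map chi_exps (chi_preimage t) = t"
proof (rule poly_mapping_eqI)
  have parity: "2 * (a div 2) + (if odd a \<and> odd b then 1 else 0) + (if odd a \<and> odd c then 1 else 0) = a"
    if "even (a + b + c)" for a b c :: nat
    using that by presburger
  fix w
  show "lk (exps_map chi_exps (chi_preimage t)) w = lk t w"
    using assms parity[of "lk t DU" "lk t DV" "lk t DW"] parity[of "lk t DV" "lk t DU" "lk t DW"]
      parity[of "lk t DW" "lk t DU" "lk t DV"]
    by (cases w) (simp_all add: lookup_exps_map_chi_exps lookup_chi_preimage diff_degree_def ac_simps)
qed

lemma chi_preimage_exps_map:
  assumes "mixed_degree m \<le> 1"
  shows "chi_preimage (exps_map chi_exps m) = m"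
proof (rule poly_mapping_eqI)
  fix x
  show "lk (chi_preimage (exps_map chi_exps m)) x = lk m x"
    using assms unfolding mixed_degree_def
    by (cases x; simp add: lookup_exps_map_chi_exps lookup_chi_preimage; presburger?)
qed

lemma Monom_chi_normal_form: "Monom m - Monom (chi_preimage (exps_map chi_exps m)) \<in> ideal_gen (gens n)"
proof (induct "mixed_degree m" arbitrary: m rule: less_induct)
  case less
  let ?s = "Poly_Mapping.single :: xvar \<Rightarrow> nat \<Rightarrow> _"
  have exchange: "Monom m - Monom (chi_preimage (exps_map chi_exps m)) \<in> ideal_gen (gens n)"
    if "\<And>v. lk A v \<le> lk m v" "Monom A - Monom B \<in> ideal_gen (gens n)"
      "exps_map chi_exps A = exps_map chi_exps B" "mixed_degree (m - A + B) < mixed_degree m"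
    for A B
    using that less by (blast intro: Monom_exchange)
  note exchange_simps = lookup_add lookup_minus lookup_single when_def mixed_degree_def
    Monom_add Monom_single quadratic_binomials_in_ideal exps_map_chi_exps_eqI
  show ?case
  proof (cases "mixed_degree m \<le> 1")
    case True
    then show ?thesis
      by (simp add: chi_preimage_exps_map)
  next
    case False
    then consider "lk m X7 \<ge> 2" | "lk m X8 \<ge> 2" | "lk m X9 \<ge> 2"
      | "lk m X7 \<ge> 1" "lk m X8 \<ge> 1" | "lk m X7 \<ge> 1" "lk m X9 \<ge> 1" | "lk m X8 \<ge> 1" "lk m X9 \<ge> 1"
      unfolding mixed_degree_def by linarith
    then show ?thesis
    proof cases
      case 1
      show ?thesis
        by (rule exchange[of "?s X7 2" "?s X4 1 + ?s X5 1"])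
          (use 1 in \<open>simp_all add: exchange_simps\<close>)
    next
      case 2
      show ?thesis
        by (rule exchange[of "?s X8 2" "?s X4 1 + ?s X6 1"])
          (use 2 in \<open>simp_all add: exchange_simps\<close>)
    next
      case 3
      show ?thesis
        by (rule exchange[of "?s X9 2" "?s X5 1 + ?s X6 1"])
          (use 3 in \<open>simp_all add: exchange_simps\<close>)
    next
      case 4
      show ?thesis
        by (rule exchange[of "?s X7 1 + ?s X8 1" "?s X4 1 + ?s X9 1"])
          (use 4 in \<open>simp_all add: exchange_simps\<close>)
    next
      case 5
      show ?thesis
        by (rule exchange[of "?s X7 1 + ?s X9 1" "?s X5 1 + ?s X8 1"])
          (use 5 in \<open>simp_all add: exchange_simps\<close>)
    next
      case 6
      show ?thesis
        by (rule exchange[of "?s X8 1 + ?s X9 1" "?s X6 1 + ?s X7 1"])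
          (use 6 in \<open>simp_all add: exchange_simps\<close>)
    qed
  qed
qed

lemma chi_kernel: "subst_hom chi p = 0 \<Longrightarrow> p \<in> ideal_gen (gens n)"
  by (rule subst_hom_Monom_kernel[where \<nu> = chi_exps and R = chi_preimage])
    (simp_all add: Monom_chi_normal_form chi_def[abs_def])

section \<open>The monomial map \<open>\<mu>\<close>\<close>

datatype uvar = U1 | V1 | W1 | U2 | V2 | W2

lemma UNIV_uvar: "(UNIV :: uvar set) = {U1, V1, W1, U2, V2, W2}"
  using uvar.exhaust by blast

definition mu_exps :: "nat \<Rightarrow> uvar \<Rightarrow> (tvar \<Rightarrow>\<^sub>0 nat)" where
  "mu_exps N y = (case y of
     U1 \<Rightarrow> Poly_Mapping.single A1 N | V1 \<Rightarrow> Poly_Mapping.single A1 1 + Poly_Mapping.single A2 1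
   | W1 \<Rightarrow> Poly_Mapping.single A2 N
   | U2 \<Rightarrow> Poly_Mapping.single B1 N | V2 \<Rightarrow> Poly_Mapping.single B1 1 + Poly_Mapping.single B2 1
   | W2 \<Rightarrow> Poly_Mapping.single B2 N)"

definition mu :: "nat \<Rightarrow> uvar \<Rightarrow> tvar mpoly" where
  "mu N y = Monom (mu_exps N y)"

lemma mu_simps:
  "mu N U1 = Var A1 ^ N" "mu N V1 = Var A1 * Var A2" "mu N W1 = Var A2 ^ N"
  "mu N U2 = Var B1 ^ N" "mu N V2 = Var B1 * Var B2" "mu N W2 = Var B2 ^ N"
  by (simp_all add: mu_def mu_exps_def Monom_add Monom_single)

lemma lookup_exps_map_mu_exps:
  "lk (exps_map (mu_exps N) m) t = (case t of
      A1 \<Rightarrow> N * lk m U1 + lk m V1 | A2 \<Rightarrow> lk m V1 + N * lk m W1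
    | B1 \<Rightarrow> N * lk m U2 + lk m V2 | B2 \<Rightarrow> lk m V2 + N * lk m W2)"
  by (cases t) (simp_all add: lookup_exps_map UNIV_uvar mu_exps_def lookup_add lookup_single mult_ac)

text \<open>The normal form in a fibre of \<open>exps_map (mu_exps N)\<close> has no factor \<open>u\<^sub>i w\<^sub>i\<close>.\<close>
definition mu_preimage :: "nat \<Rightarrow> (tvar \<Rightarrow>\<^sub>0 nat) \<Rightarrow> (uvar \<Rightarrow>\<^sub>0 nat)" where
  "mu_preimage N t =
     Poly_Mapping.single U1 ((lk t A1 - min (lk t A1) (lk t A2)) div N)
     + Poly_Mapping.single V1 (min (lk t A1) (lk t A2))
     + Poly_Mapping.single W1 ((lk t A2 - min (lk t A1) (lk t A2)) div N)
     + Poly_Mapping.single U2 ((lk t B1 - min (lk t B1) (lk t B2)) div N)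
     + Poly_Mapping.single V2 (min (lk t B1) (lk t B2))
     + Poly_Mapping.single W2 ((lk t B2 - min (lk t B1) (lk t B2)) div N)"

lemma mu_preimage_exps_map:
  assumes "N > 0" "min (lk m U1) (lk m W1) = 0" "min (lk m U2) (lk m W2) = 0"
  shows "mu_preimage N (exps_map (mu_exps N) m) = m"
proof (rule poly_mapping_eqI)
  have normal: "min (N * a + b) (b + N * c) = b" "(N * a + b - b) div N = a" "(b + N * c - b) div N = c"
    if "min a c = 0" for a b c :: nat
    using that \<open>N > 0\<close> by (auto simp: min_def)
  fix y
  show "lk (mu_preimage N (exps_map (mu_exps N) m)) y = lk m y"
    using normal[OF assms(2)] normal[OF assms(3)]
    by (cases y) (simp_all add: mu_preimage_def lookup_add lookup_single lookup_exps_map_mu_exps)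
qed

definition gamma1 :: "nat \<Rightarrow> uvar mpoly" where
  "gamma1 N = Var U1 * Var W1 - Var V1 ^ N"

definition gamma2 :: "nat \<Rightarrow> uvar mpoly" where
  "gamma2 N = Var U2 * Var W2 - Var V2 ^ N"

lemma Monom_mu_normal_form:
  assumes "N > 0"
  shows "Monom m - Monom (mu_preimage N (exps_map (mu_exps N) m)) \<in> ideal_gen {gamma1 N, gamma2 N}"
proof -
  let ?s = "Poly_Mapping.single :: uvar \<Rightarrow> nat \<Rightarrow> _"
  let ?I = "ideal_gen {gamma1 N, gamma2 N}"
  define k1 where "k1 = min (lk m U1) (lk m W1)"
  define k2 where "k2 = min (lk m U2) (lk m W2)"
  define A where "A = ?s U1 k1 + ?s W1 k1 + ?s U2 k2 + ?s W2 k2"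
  define B where "B = ?s V1 (N * k1) + ?s V2 (N * k2)"
  show ?thesis
  proof (rule Monom_exchange[of A m B])
    show "lk A y \<le> lk m y" for y
      by (cases y) (simp_all add: A_def lookup_add lookup_single k1_def k2_def)
    have "(Var U1 * Var W1) ^ k1 - (Var V1 ^ N) ^ k1 \<in> ?I"
      "(Var U2 * Var W2) ^ k2 - (Var V2 ^ N) ^ k2 \<in> ?I"
      by (intro ideal_gen_power_diff ideal_gen_base; simp add: gamma1_def gamma2_def)+
    then have "((Var U1 * Var W1) ^ k1 - (Var V1 ^ N) ^ k1) * (Var U2 * Var W2) ^ k2
        + (Var V1 ^ N) ^ k1 * ((Var U2 * Var W2) ^ k2 - (Var V2 ^ N) ^ k2) \<in> ?I"
      by (intro ideal_gen_add ideal_gen_mult_left ideal_gen_mult_right)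
    then show "Monom A - Monom B \<in> ?I"
      by (simp add: A_def B_def Monom_add Monom_single power_mult power_mult_distrib algebra_simps)
    show "exps_map (mu_exps N) A = exps_map (mu_exps N) B"
      by (rule poly_mapping_eqI, case_tac k)
        (simp_all add: lookup_exps_map_mu_exps A_def B_def lookup_add lookup_single)
    have "mu_preimage N (exps_map (mu_exps N) (m - A + B)) = m - A + B"
      using assms by (intro mu_preimage_exps_map)
        (auto simp: A_def B_def k1_def k2_def lookup_add lookup_minus lookup_single min_def)
    then show "Monom (m - A + B) - Monom (mu_preimage N (exps_map (mu_exps N) (m - A + B))) \<in> ?I"
      by simp
  qed
qed

lemma mu_kernel:
  "N > 0 \<Longrightarrow> subst_hom (mu N) p = 0 \<Longrightarrow> p \<in> ideal_gen {gamma1 N, gamma2 N}"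
  by (rule subst_hom_Monom_kernel[where \<nu> = "mu_exps N" and R = "mu_preimage N"])
    (simp_all add: Monom_mu_normal_form mu_def[abs_def])

section \<open>Sum and difference coordinates\<close>

definition half :: "'v mpoly" where
  "half = Const (1 / 2)"

lemma two_mult_half: "2 * half = (1 :: 'v mpoly)"
  by (simp add: half_def flip: Const_numeral Const_mult)

lemma half_mult_two [simp]: "half * (2 * a) = (a :: 'v mpoly)"
  by (simp add: two_mult_half mult.commute[of half 2] flip: mult.assoc)

lemma neg_two_power_mult_neg_half_power: "- (2 ^ n) * (- (half ^ n) * p) = (p :: 'v mpoly)"
proof -
  have "- (2 ^ n) * (- (half ^ n) * p) = (2 * half) ^ n * p"
    by (simp add: power_mult_distrib)
  then show ?thesis
    by (simp add: two_mult_half)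
qed

lemma subst_hom_half [simp]: "subst_hom g half = half"
  by (simp add: half_def)

definition sd_coords :: "sdvar \<Rightarrow> uvar mpoly" where
  "sd_coords z = (case z of
     SU \<Rightarrow> Var U1 + Var U2 | SV \<Rightarrow> Var V1 + Var V2 | SW \<Rightarrow> Var W1 + Var W2
   | DU \<Rightarrow> Var U1 - Var U2 | DV \<Rightarrow> Var V1 - Var V2 | DW \<Rightarrow> Var W1 - Var W2)"

definition uvw_coords :: "uvar \<Rightarrow> sdvar mpoly" where
  "uvw_coords y = (case y of
     U1 \<Rightarrow> half * (Var SU + Var DU) | U2 \<Rightarrow> half * (Var SU - Var DU)
   | V1 \<Rightarrow> half * (Var SV + Var DV) | V2 \<Rightarrow> half * (Var SV - Var DV)
   | W1 \<Rightarrow> half * (Var SW + Var DW) | W2 \<Rightarrow> half * (Var SW - Var DW))"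

text \<open>The involution \<open>d \<mapsto> -d\<close>, i.e.\ the swap \<open>a\<^sub>i \<leftrightarrow> b\<^sub>i\<close> of the two factors.\<close>
definition swap :: "sdvar \<Rightarrow> sdvar mpoly" where
  "swap z = (case z of
     SU \<Rightarrow> Var SU | SV \<Rightarrow> Var SV | SW \<Rightarrow> Var SW
   | DU \<Rightarrow> - Var DU | DV \<Rightarrow> - Var DV | DW \<Rightarrow> - Var DW)"

lemma uvw_coords_sd_coords: "subst_hom uvw_coords (subst_hom sd_coords p) = p"
  by (rule subst_hom_inverse, case_tac v)
    (simp_all add: sd_coords_def uvw_coords_def subst_hom_ring_simps flip: distrib_left right_diff_distrib)

lemma sd_coords_uvw_coords: "subst_hom sd_coords (subst_hom uvw_coords q) = q"
  by (rule subst_hom_inverse, case_tac v)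
    (simp_all add: sd_coords_def uvw_coords_def subst_hom_ring_simps)

lemma swap_swap: "subst_hom swap (subst_hom swap p) = p"
  by (rule subst_hom_inverse, case_tac v) (simp_all add: swap_def subst_hom_uminus)

lemma swap_chi: "subst_hom swap (subst_hom chi p) = subst_hom chi p"
proof -
  have "(\<lambda>x. subst_hom swap (chi x)) = chi"
    by (rule ext, case_tac x) (simp_all add: chi_simps swap_def subst_hom_ring_simps)
  then show ?thesis
    by (simp add: subst_hom_subst_hom)
qed

lemma phi_factorization: "phi n p = subst_hom (mu (n + 1)) (subst_hom sd_coords (subst_hom chi p))"
proof -
  have "(\<lambda>x. subst_hom (mu (n + 1)) (subst_hom sd_coords (chi x))) = phi_img n"
    by (rule ext, case_tac x)
      (simp_all add: chi_simps sd_coords_def phi_img_def Let_def mu_simps subst_hom_ring_simps)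
  then show ?thesis
    by (simp add: phi_def subst_hom_subst_hom)
qed

definition gamma1_sd :: "nat \<Rightarrow> sdvar mpoly" where
  "gamma1_sd N = subst_hom uvw_coords (gamma1 N)"

definition gamma2_sd :: "nat \<Rightarrow> sdvar mpoly" where
  "gamma2_sd N = subst_hom uvw_coords (gamma2 N)"

lemma gamma1_sd_eq:
  "gamma1_sd N = half * (Var SU + Var DU) * (half * (Var SW + Var DW)) - (half * (Var SV + Var DV)) ^ N"
  by (simp add: gamma1_sd_def gamma1_def uvw_coords_def subst_hom_ring_simps)

lemma gamma2_sd_eq:
  "gamma2_sd N = half * (Var SU - Var DU) * (half * (Var SW - Var DW)) - (half * (Var SV - Var DV)) ^ N"
  by (simp add: gamma2_sd_def gamma2_def uvw_coords_def subst_hom_ring_simps)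

lemma swap_gamma_sd: "subst_hom swap (gamma1_sd N) = gamma2_sd N" "subst_hom swap (gamma2_sd N) = gamma1_sd N"
  by (simp_all add: gamma1_sd_eq gamma2_sd_eq swap_def subst_hom_ring_simps)

lemma phi_gamma_sd:
  "subst_hom (mu N) (subst_hom sd_coords (gamma1_sd N)) = 0"
  "subst_hom (mu N) (subst_hom sd_coords (gamma2_sd N)) = 0"
  unfolding gamma1_sd_def gamma2_sd_def sd_coords_uvw_coords
  by (simp_all add: gamma1_def gamma2_def mu_simps subst_hom_ring_simps power_mult_distrib)

definition even_part :: "nat \<Rightarrow> sdvar mpoly" where
  "even_part n =
     (\<Sum>i=0..(n + 1) div 2. of_nat ((n + 1) choose (2 * i)) * Var SV ^ (n + 1 - 2 * i) * (Var DV ^ 2) ^ i)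
     - 2 ^ (n - 1) * (Var SU * Var SW + Var DU * Var DW)"

definition odd_part :: "nat \<Rightarrow> sdvar mpoly" where
  "odd_part n =
     (\<Sum>i=0..(n + 1) div 2. of_nat ((n + 1) choose (2 * i + 1)) * Var SV ^ (n - 2 * i) * (Var DV ^ 2) ^ i) * Var DV
     - 2 ^ (n - 1) * (Var SU * Var DW + Var SW * Var DU)"

lemma chi_f1: "subst_hom chi (f1 n) = even_part n"
  by (simp add: f1_def even_part_def subst_hom_ring_simps chi_simps)

lemma chi_f2: "subst_hom chi (f2 n) = Var DV * odd_part n"
  by (simp add: f2_def odd_part_def subst_hom_ring_simps chi_simps sum_distrib_left sum_distrib_right
      power2_eq_square algebra_simps)

lemma chi_f6: "subst_hom chi (f6 n) = Var DW * odd_part n"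
  by (simp add: f6_def odd_part_def subst_hom_ring_simps chi_simps sum_distrib_left sum_distrib_right
      power2_eq_square algebra_simps)

lemma chi_f7: "subst_hom chi (f7 n) = Var DU * odd_part n"
  by (simp add: f7_def odd_part_def subst_hom_ring_simps chi_simps sum_distrib_left sum_distrib_right
      power2_eq_square algebra_simps)

lemma chi_quadratic_binomials:
  "subst_hom chi f3 = 0" "subst_hom chi f4 = 0" "subst_hom chi f5 = 0"
  "subst_hom chi f8 = 0" "subst_hom chi f9 = 0" "subst_hom chi f10 = 0"
  by (simp_all add: f3_def f4_def f5_def f8_def f9_def f10_def subst_hom_ring_simps chi_simps
      power2_eq_square mult_ac)

lemma gamma_sd_add: "n \<ge> 1 \<Longrightarrow> gamma1_sd (n + 1) + gamma2_sd (n + 1) = - (half ^ n) * even_part n"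
  unfolding gamma1_sd_eq gamma2_sd_eq even_part_def
  by (rule relation_sum_diff_identities(1)[OF two_mult_half])

lemma gamma_sd_diff: "n \<ge> 1 \<Longrightarrow> gamma1_sd (n + 1) - gamma2_sd (n + 1) = - (half ^ n) * odd_part n"
  unfolding gamma1_sd_eq gamma2_sd_eq odd_part_def
  by (rule relation_sum_diff_identities(2)[OF two_mult_half])

section \<open>The kernel of \<open>\<phi>\<close>\<close>

definition chi_image :: "nat \<Rightarrow> sdvar mpoly set" where
  "chi_image n = subst_hom chi ` ideal_gen (gens n)"

lemma chi_image_add: "a \<in> chi_image n \<Longrightarrow> b \<in> chi_image n \<Longrightarrow> a + b \<in> chi_image n"
  unfolding chi_image_def by (auto simp: image_iff simp flip: subst_hom_add intro!: ideal_gen_add)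

lemma chi_image_0: "0 \<in> chi_image n"
  unfolding chi_image_def by (rule image_eqI[of _ _ 0]) simp_all

lemma chi_image_sum: "(\<And>a. a \<in> A \<Longrightarrow> f a \<in> chi_image n) \<Longrightarrow> sum f A \<in> chi_image n"
  by (induct A rule: infinite_finite_induct) (simp_all add: chi_image_0 chi_image_add)

lemma chi_image_chi_mult: "y \<in> chi_image n \<Longrightarrow> subst_hom chi q * y \<in> chi_image n"
  unfolding chi_image_def by (auto simp: image_iff simp flip: subst_hom_mult intro!: ideal_gen_mult_left)

lemma chi_image_Const_mult: "y \<in> chi_image n \<Longrightarrow> Const c * y \<in> chi_image n"
  using chi_image_chi_mult[of y n "Const c"] by simp

lemma chi_image_chi: "p \<in> ideal_gen (gens n) \<Longrightarrow> subst_hom chi p \<in> chi_image n"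
  unfolding chi_image_def by (rule imageI)

lemma gamma_sd_add_in_chi_image:
  assumes "n \<ge> 1"
  shows "gamma1_sd (n + 1) + gamma2_sd (n + 1) \<in> chi_image n"
proof -
  have "gamma1_sd (n + 1) + gamma2_sd (n + 1) = subst_hom chi (- (half ^ n) * f1 n)"
    unfolding gamma_sd_add[OF assms] by (simp add: chi_f1 subst_hom_ring_simps)
  also have "\<dots> \<in> chi_image n"
    by (intro chi_image_chi ideal_gen_mult_left ideal_gen_base) (simp add: gens_eq)
  finally show ?thesis .
qed

lemma diff_var_gamma_sd_diff_in_chi_image:
  assumes "n \<ge> 1" "D \<in> {DU, DV, DW}"
  shows "Var D * (gamma1_sd (n + 1) - gamma2_sd (n + 1)) \<in> chi_image n"
proof -
  have "\<exists>f\<in>gens n. subst_hom chi f = Var D * odd_part n"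
    using assms(2) unfolding gens_eq by (elim insertE emptyE) (simp_all add: chi_f2 chi_f6 chi_f7)
  then obtain f where f: "f \<in> gens n" "subst_hom chi f = Var D * odd_part n" ..
  have "Var D * (gamma1_sd (n + 1) - gamma2_sd (n + 1)) = subst_hom chi (- (half ^ n) * f)"
    unfolding gamma_sd_diff[OF assms(1)]
    by (simp add: f(2) subst_hom_mult subst_hom_uminus subst_hom_power mult.left_commute)
  also have "\<dots> \<in> chi_image n"
    by (intro chi_image_chi ideal_gen_mult_left ideal_gen_base f(1))
  finally show ?thesis .
qed

lemma finite_UNIV_sdvar: "finite (UNIV :: sdvar set)"
  by (simp add: UNIV_sdvar)

lemma swap_Monom: "subst_hom swap (Monom t) = (- 1) ^ diff_degree t * Monom t"
proof -
  have swap_power: "swap v ^ k = (if v \<in> {DU, DV, DW} then (- 1) ^ k else 1) * Var v ^ k" for v k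
    by (cases v) (simp_all add: swap_def power_minus[of "Var DU"] power_minus[of "Var DV"] power_minus[of "Var DW"])
  have "subst_hom swap (Monom t) = (\<Prod>v\<in>UNIV. swap v ^ lk t v)"
    unfolding subst_hom_Monom by (rule Monom_eval_superset) (simp_all add: finite_UNIV_sdvar)
  also have "\<dots> = (\<Prod>v\<in>UNIV. if v \<in> {DU, DV, DW} then (- 1) ^ lk t v else 1) * (\<Prod>v\<in>UNIV. Var v ^ lk t v)"
    by (simp only: swap_power prod.distrib)
  also have "(\<Prod>v\<in>UNIV. Var v ^ lk t v) = Monom t"
    unfolding Monom_eval_Var[symmetric] by (rule Monom_eval_superset[symmetric]) (simp_all add: finite_UNIV_sdvar)
  also have "(\<Prod>v\<in>UNIV. if v \<in> {DU, DV, DW} then (- 1) ^ lk t v else 1) = ((- 1) ^ diff_degree t :: sdvar mpoly)"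
    by (simp add: UNIV_sdvar diff_degree_def power_add)
  finally show ?thesis .
qed

lemma Monom_eq_chi_preimage: "even (diff_degree t) \<Longrightarrow> Monom t = subst_hom chi (Monom (chi_preimage t))"
  using subst_hom_Monom_Monom[of chi_exps "chi_preimage t"]
  by (simp add: exps_map_chi_preimage chi_def[abs_def])

lemma Monom_remove_diff_var:
  assumes "D \<in> {DU, DV, DW}" "lk t D > 0"
  shows "Monom t = Monom (t - Poly_Mapping.single D 1) * Var D"
    and "diff_degree (t - Poly_Mapping.single D 1) = diff_degree t - 1"
proof -
  have "t - Poly_Mapping.single D 1 + Poly_Mapping.single D 1 = t"
    by (rule poly_mapping_diff_add_cancel) (use assms in \<open>auto simp: lookup_single when_def\<close>)
  then show "Monom t = Monom (t - Poly_Mapping.single D 1) * Var D"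
    by (metis Monom_add Monom_single power_one_right)
  show "diff_degree (t - Poly_Mapping.single D 1) = diff_degree t - 1"
    using assms by (auto simp: diff_degree_def lookup_minus lookup_single)
qed

text \<open>An even monomial lies in the image of \<open>chi\<close>; an odd one is an even one times a single
  difference variable \<open>d\<close>, and \<open>d (g\<^sub>1 - g\<^sub>2)\<close> is a multiple of \<open>chi f\<^sub>2\<close>, \<open>chi f\<^sub>6\<close> or \<open>chi f\<^sub>7\<close>.\<close>
lemma Monom_swap_combination_in_chi_image:
  assumes "n \<ge> 1"
  shows "Monom t * gamma1_sd (n + 1) + subst_hom swap (Monom t) * gamma2_sd (n + 1) \<in> chi_image n"
proof (cases "even (diff_degree t)")
  case True
  then have "Monom t * gamma1_sd (n + 1) + subst_hom swap (Monom t) * gamma2_sd (n + 1)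
      = subst_hom chi (Monom (chi_preimage t)) * (gamma1_sd (n + 1) + gamma2_sd (n + 1))"
    by (simp add: swap_Monom distrib_left flip: Monom_eq_chi_preimage)
  also have "\<dots> \<in> chi_image n"
    by (rule chi_image_chi_mult[OF gamma_sd_add_in_chi_image[OF assms]])
  finally show ?thesis .
next
  case False
  then obtain D where D: "D \<in> {DU, DV, DW}" "odd (lk t D)"
    unfolding diff_degree_def by auto
  then have "lk t D > 0"
    by (auto intro: odd_pos)
  note remove = Monom_remove_diff_var[OF D(1) this]
  have "even (diff_degree (t - Poly_Mapping.single D 1))"
    using False remove(2) by (auto simp: odd_pos)
  then have Monom_t: "Monom t = subst_hom chi (Monom (chi_preimage (t - Poly_Mapping.single D 1))) * Var D"
    by (simp add: remove(1) flip: Monom_eq_chi_preimage)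
  have "Monom t * gamma1_sd (n + 1) + subst_hom swap (Monom t) * gamma2_sd (n + 1)
      = Monom t * (gamma1_sd (n + 1) - gamma2_sd (n + 1))"
    using False by (simp add: swap_Monom right_diff_distrib)
  also have "\<dots> = subst_hom chi (Monom (chi_preimage (t - Poly_Mapping.single D 1)))
        * (Var D * (gamma1_sd (n + 1) - gamma2_sd (n + 1)))"
    unfolding Monom_t by (rule mult.assoc)
  also have "\<dots> \<in> chi_image n"
    by (rule chi_image_chi_mult[OF diff_var_gamma_sd_diff_in_chi_image[OF assms D(1)]])
  finally show ?thesis .
qed

lemma swap_combination_in_chi_image:
  assumes "n \<ge> 1"
  shows "A * gamma1_sd (n + 1) + subst_hom swap A * gamma2_sd (n + 1) \<in> chi_image n"
proof -
  define K where "K = Poly_Mapping.keys A"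
  define c where "c = lk A"
  have "A = (\<Sum>t\<in>K. Const (c t) * Monom t)"
    unfolding K_def c_def by (rule mpoly_sum_Monom)
  then have "A * gamma1_sd (n + 1) + subst_hom swap A * gamma2_sd (n + 1)
      = (\<Sum>t\<in>K. Const (c t) * (Monom t * gamma1_sd (n + 1) + subst_hom swap (Monom t) * gamma2_sd (n + 1)))"
    by (simp add: subst_hom_sum subst_hom_mult sum_distrib_right distrib_left sum.distrib mult.assoc)
  also have "\<dots> \<in> chi_image n"
    by (intro chi_image_sum chi_image_Const_mult Monom_swap_combination_in_chi_image[OF assms])
  finally show ?thesis .
qed

lemma phi_kernel_subset:
  assumes n: "n \<ge> 1" and p: "phi n p = 0"
  shows "p \<in> ideal_gen (gens n)"
proof -
  define q where "q = subst_hom chi p"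
  have "subst_hom (mu (n + 1)) (subst_hom sd_coords q) = 0"
    using p by (simp add: phi_factorization q_def)
  then have "subst_hom sd_coords q \<in> ideal_gen {gamma1 (n + 1), gamma2 (n + 1)}"
    by (simp add: mu_kernel)
  then obtain A B where "subst_hom sd_coords q = A * gamma1 (n + 1) + B * gamma2 (n + 1)"
    by (rule ideal_gen_pairE)
  then have "subst_hom uvw_coords (subst_hom sd_coords q)
      = subst_hom uvw_coords (A * gamma1 (n + 1) + B * gamma2 (n + 1))"
    by simp
  then have q: "q = subst_hom uvw_coords A * gamma1_sd (n + 1) + subst_hom uvw_coords B * gamma2_sd (n + 1)"
    by (simp only: uvw_coords_sd_coords gamma1_sd_def gamma2_sd_def subst_hom_add subst_hom_mult)
  define X where "X = subst_hom uvw_coords A + subst_hom swap (subst_hom uvw_coords B)"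
  \<comment> \<open>\<open>q\<close> is \<open>swap\<close>-invariant, and \<open>swap\<close> exchanges the two relations\<close>
  have "2 * q = q + subst_hom swap q"
    by (simp add: q_def swap_chi)
  also have "\<dots> = X * gamma1_sd (n + 1) + subst_hom swap X * gamma2_sd (n + 1)"
    by (simp add: q X_def subst_hom_add subst_hom_mult swap_gamma_sd swap_swap algebra_simps)
  also have "\<dots> \<in> chi_image n"
    by (rule swap_combination_in_chi_image[OF n])
  finally obtain r where r: "r \<in> ideal_gen (gens n)" "subst_hom chi r = 2 * q"
    unfolding chi_image_def by auto
  have "subst_hom chi (2 * p - r) = 0"
    using r(2) by (simp add: subst_hom_diff subst_hom_mult q_def)
  then have "2 * p - r + r \<in> ideal_gen (gens n)"
    by (rule ideal_gen_add[OF chi_kernel r(1)])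
  then have "half * (2 * p) \<in> ideal_gen (gens n)"
    by (simp add: ideal_gen_mult_left del: half_mult_two)
  then show ?thesis
    by simp
qed

lemma gens_in_phi_kernel:
  assumes n: "n \<ge> 1" and f: "f \<in> gens n"
  shows "phi n f = 0"
proof -
  let ?\<psi> = "\<lambda>q. subst_hom (mu (n + 1)) (subst_hom sd_coords q)"
  have "even_part n = - (2 ^ n) * (gamma1_sd (n + 1) + gamma2_sd (n + 1))"
    "odd_part n = - (2 ^ n) * (gamma1_sd (n + 1) - gamma2_sd (n + 1))"
    by (simp_all only: gamma_sd_add[OF n] gamma_sd_diff[OF n] neg_two_power_mult_neg_half_power)
  then have "?\<psi> (even_part n) = 0" "?\<psi> (odd_part n) = 0"
    by (simp_all add: subst_hom_ring_simps phi_gamma_sd)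
  with f show ?thesis
    by (auto simp: gens_eq phi_factorization chi_f1 chi_f2 chi_f6 chi_f7 chi_quadratic_binomials
        subst_hom_mult)
qed

theorem mainTheorem2:
  fixes n :: nat
  assumes "n \<ge> 1"
  shows "{p. phi n p = 0} = ideal_gen (gens n)"
proof
  show "{p. phi n p = 0} \<subseteq> ideal_gen (gens n)"
    using phi_kernel_subset[OF assms] by blast
  show "ideal_gen (gens n) \<subseteq> {p. phi n p = 0}"
    using gens_in_phi_kernel[OF assms] subst_hom_ideal_gen_eq_0[of "gens n" "phi_img n"]
    by (auto simp: phi_def)
qed

end
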